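(* Let $n$ be a positive integer. The Logarithmic Least Squares Method is the unique weighting method $f: \mathcal{A}^{n \times n} \to \mathcal{R}^n$ satisfying correctness and invariance to $\alpha$-transformation on a triad. That is, a weighting method $f$ satisfies both properties if and only if, for every $\mathbf{A} \in \mathcal{A}^{n\times n}$ and every $i$, \[ f_i(\mathbf{A}) = \frac{\prod_{j=1}^n a_{i,j}^{1/n}}{\sum_{k=1}^n \prod_{j=1}^n a_{k,j}^{1/n}}. \]
   Context: A pairwise comparison matrix of size $n$ is a matrix $\mathbf{A} = [a_{i,j}]$ with all entries positive and $a_{j,i} = 1/a_{i,j}$ for all $1 \le i,j \le n$; $\mathcal{A}^{n\times n}$ denotes the set of these. $\mathbf{A}$ is consistent if $a_{i,k} = a_{i,j}a_{j,k}$ for all $i,j,k$. A weight vector is $\mathbf{w} \in \mathbb{R}^n$ with all entries positive and $\sum_i w_i = 1$; $\mathcal{R}^n$ denotes the set of weight vectors. A weighting method is any function $f: \mathcal{A}^{n\times n} \to \mathcal{R}^n$. The Logarithmic Least Squares Method (LLSM) assigns to $\mathbf{A}$ the minimizer over $\mathbf{w} \in \mathcal{R}^n$ of $\sum_{i=1}^n\sum_{j=1}^n [\log a_{i,j} - \log(w_i/w_j)]^2$, which equals the normalized row geometric mean vector $w_i = \prod_j a_{i,j}^{1/n} / \sum_k \prod_j a_{k,j}^{1/n}$. Correctness: $f$ is correct if for every consistent $\mathbf{A}\in\mathcal{A}^{n\times n}$, $f_i(\mathbf{A})/f_j(\mathbf{A}) = a_{i,j}$ for all $i,j$. An $\alpha$-transformation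 on the triad $(i,j,k)$ (three distinct indices), with $\alpha>0$, maps $\mathbf{A}$ to the pairwise comparison matrix $\hat{\mathbf{A}}$ with $\hat a_{i,j} = \alpha a_{i,j}$, $\hat a_{j,i} = a_{j,i}/\alpha$, $\hat a_{j,k} = \alpha a_{j,k}$, $\hat a_{k,j} = a_{k,j}/\alpha$, $\hat a_{k,i} = \alpha a_{k,i}$, $\hat a_{i,k} = a_{i,k}/\alpha$, and all other entries unchanged. Invariance to $\alpha$-transformation on a triad: $f(\mathbf{A}) = f(\hat{\mathbf{A}})$ whenever $\hat{\mathbf{A}}$ is obtained from $\mathbf{A}$ by an $\alpha$-transformation on a triad. *)

theory Defs
  imports "HOL-Analysis.Analysis"
begin

text \<open>Matrices of size n are indexed by a finite type 'n, with n = CARD('n) \<ge> 1.\<close>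

definition pcm :: "real^'n^'n \<Rightarrow> bool" where
  "pcm A \<longleftrightarrow> (\<forall>i j. A$i$j > 0 \<and> A$j$i = 1 / A$i$j)"

definition consistent_pcm :: "real^'n^'n \<Rightarrow> bool" where
  "consistent_pcm A \<longleftrightarrow> (\<forall>i j k. A$i$k = A$i$j * A$j$k)"

definition weight_vector :: "real^'n \<Rightarrow> bool" where
  "weight_vector w \<longleftrightarrow> (\<forall>i. w$i > 0) \<and> (\<Sum>i\<in>UNIV. w$i) = 1"

text \<open>A weighting method: a function from pairwise comparison matrices to weight vectors
  (values on non-PCM arguments are irrelevant).\<close>
definition weighting_method :: "(real^'n^'n \<Rightarrow> real^'n) \<Rightarrow> bool" where
  "weighting_method f \<longleftrightarrow> (\<forall>A. pcm A \<longrightarrow> weight_vector (f A))"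

definition correct_method :: "(real^'n^'n \<Rightarrow> real^'n) \<Rightarrow> bool" where
  "correct_method f \<longleftrightarrow>
     (\<forall>A. pcm A \<and> consistent_pcm A \<longrightarrow> (\<forall>i j. f A $ i / f A $ j = A$i$j))"

definition alpha_transform :: "real \<Rightarrow> 'n \<Rightarrow> 'n \<Rightarrow> 'n \<Rightarrow> real^'n^'n \<Rightarrow> real^'n^'n" where
  "alpha_transform \<alpha> i j k A = (\<chi> p q.
     if (p = i \<and> q = j) \<or> (p = j \<and> q = k) \<or> (p = k \<and> q = i) then \<alpha> * A$p$q
     else if (p = j \<and> q = i) \<or> (p = k \<and> q = j) \<or> (p = i \<and> q = k) then A$p$q / \<alpha>
     else A$p$q)"

definition triad_invariant :: "(real^'n^'n \<Rightarrow> real^'n) \<Rightarrow> bool" where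
  "triad_invariant f \<longleftrightarrow>
     (\<forall>A i j k \<alpha>. pcm A \<and> i \<noteq> j \<and> j \<noteq> k \<and> i \<noteq> k \<and> \<alpha> > 0 \<longrightarrow>
        f (alpha_transform \<alpha> i j k A) = f A)"

definition llsm :: "real^'n^'n \<Rightarrow> real^'n" where
  "llsm A = (\<chi> i. (\<Prod>j\<in>UNIV. A$i$j powr (1 / real CARD('n))) /
                   (\<Sum>k\<in>UNIV. \<Prod>j\<in>UNIV. A$k$j powr (1 / real CARD('n))))"

end

theory Submission
  imports Defs
begin

text \<open>Work in logarithmic coordinates: an \<open>\<alpha>\<close>-transformation on the triad \<open>(i, j, k)\<close> adds
  \<open>ln \<alpha>\<close> times a skew-symmetric "triad generator" to the matrix of logarithms \<open>ln a\<^sub>p\<^sub>q\<close>.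
  Every skew-symmetric matrix with zero row sums is a linear combination of triad generators.
  Given a PCM \<open>A\<close> with log row means \<open>\<rho>\<close>, the residual \<open>\<rho>\<^sub>p - \<rho>\<^sub>q - ln a\<^sub>p\<^sub>q\<close> is such a matrix, so
  a triad-invariant method assigns to \<open>A\<close> the same weights as to the consistent matrix
  \<open>exp (\<rho>\<^sub>p - \<rho>\<^sub>q)\<close>; correctness forces these to be proportional to \<open>exp \<rho>\<close>, i.e.\ the
  LLSM weights. Conversely LLSM is correct, and triad generators have zero row sums, so
  they leave the row geometric means unchanged.\<close>

definition exp_perturb :: "('n \<Rightarrow> 'n \<Rightarrow> real) \<Rightarrow> real^'n^'n \<Rightarrow> real^'n^'n" where
  "exp_perturb E A = (\<chi> p q. A$p$q * exp (E p q))"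

lemma exp_perturb_nth [simp]: "exp_perturb E A $ p $ q = A$p$q * exp (E p q)"
  by (simp add: exp_perturb_def)

lemma exp_perturb_exp_perturb: "exp_perturb E (exp_perturb F A) = exp_perturb (\<lambda>p q. F p q + E p q) A"
  by (simp add: vec_eq_iff exp_add)

lemma exp_perturb_zero [simp]: "exp_perturb (\<lambda>p q. 0) A = A"
  by (simp add: vec_eq_iff)

lemma pcm_pos: "pcm A \<Longrightarrow> A$i$j > 0"
  unfolding pcm_def by blast

lemma pcm_ln_swap:
  assumes "pcm A"
  shows "ln (A$j$i) = - ln (A$i$j)"
proof -
  have "A$j$i = 1 / A$i$j" using assms unfolding pcm_def by blast
  then show ?thesis using pcm_pos[OF assms, of i j] by (simp add: ln_div)
qed

lemma pcm_exp_perturb: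
  assumes "pcm A" and skew: "\<And>p q. E q p = - E p q"
  shows "pcm (exp_perturb E A)"
  unfolding pcm_def
proof (intro allI conjI)
  fix i j
  show "exp_perturb E A $ i $ j > 0"
    using pcm_pos[OF \<open>pcm A\<close>] by simp
  show "exp_perturb E A $ j $ i = 1 / exp_perturb E A $ i $ j"
  proof -
    have "A$j$i = 1 / A$i$j" using \<open>pcm A\<close> unfolding pcm_def by blast
    then show ?thesis by (simp add: skew[of i j] exp_minus field_simps)
  qed
qed

definition triad_gen :: "'n \<Rightarrow> 'n \<Rightarrow> 'n \<Rightarrow> 'n \<Rightarrow> 'n \<Rightarrow> real" where
  "triad_gen i j k p q =
     of_bool (p = i \<and> q = j) + of_bool (p = j \<and> q = k) + of_bool (p = k \<and> q = i)
     - of_bool (p = j \<and> q = i) - of_bool (p = k \<and> q = j) - of_bool (p = i \<and> q = k)"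

lemma triad_gen_swap: "triad_gen i j k q p = - triad_gen i j k p q"
  unfolding triad_gen_def by (simp add: conj_commute)

lemma triad_gen_degenerate: "i = j \<or> j = k \<or> i = k \<Longrightarrow> triad_gen i j k p q = 0"
  unfolding triad_gen_def by (elim disjE) (simp_all add: conj_commute)

lemma sum_triad_gen_row: "(\<Sum>q\<in>UNIV. triad_gen i j k p (q :: 'n :: finite)) = 0"
proof -
  have delta: "(\<Sum>q\<in>UNIV. of_bool (p = a \<and> q = b) :: real) = of_bool (p = a)" for a b :: 'n
    by (cases "p = a") simp_all
  show ?thesis unfolding triad_gen_def by (simp only: sum.distrib sum_subtractf delta)
qed

lemma sum_triad_gen_swap:
  "(\<Sum>(i, j, k)\<in>S. t i j k * triad_gen i j k q p) = - (\<Sum>(i, j, k)\<in>S. t i j k * triad_gen i j k p q)"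
  unfolding sum_negf[symmetric] by (rule sum.cong) (auto simp: triad_gen_swap[of _ _ _ q p])

lemma alpha_transform_eq_exp_perturb:
  assumes "i \<noteq> j" "j \<noteq> k" "i \<noteq> k" "\<alpha> > 0"
  shows "alpha_transform \<alpha> i j k A = exp_perturb (\<lambda>p q. ln \<alpha> * triad_gen i j k p q) A"
  using assms unfolding alpha_transform_def triad_gen_def
  by (auto simp: vec_eq_iff exp_minus field_simps)

lemma pcm_alpha_transform:
  assumes "pcm A" "i \<noteq> j" "j \<noteq> k" "i \<noteq> k" "\<alpha> > 0"
  shows "pcm (alpha_transform \<alpha> i j k A)"
  unfolding alpha_transform_eq_exp_perturb[OF assms(2-5)]
  using assms(1) by (rule pcm_exp_perturb) (metis triad_gen_swap mult_minus_right)

lemma triad_invariant_exp_perturb_sum: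
  assumes inv: "triad_invariant f" and "finite S" and "pcm A"
  shows "f (exp_perturb (\<lambda>p q. \<Sum>(i, j, k)\<in>S. t i j k * triad_gen i j k p q) A) = f A"
  using \<open>finite S\<close>
proof (induction S)
  case empty
  show ?case by simp
next
  case (insert x S)
  obtain i j k where x: "x = (i, j, k)" by (cases x) blast
  define B where "B = exp_perturb (\<lambda>p q. \<Sum>(i, j, k)\<in>S. t i j k * triad_gen i j k p q) A"
  have "pcm B"
    unfolding B_def using \<open>pcm A\<close>
    by (rule pcm_exp_perturb) (rule sum_triad_gen_swap)
  have step: "exp_perturb (\<lambda>p q. \<Sum>(i, j, k)\<in>insert x S. t i j k * triad_gen i j k p q) A
      = exp_perturb (\<lambda>p q. t i j k * triad_gen i j k p q) B"
    using insert.hyps by (simp add: B_def x exp_perturb_exp_perturb add.commute)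
  have "f (exp_perturb (\<lambda>p q. t i j k * triad_gen i j k p q) B) = f B"
  proof (cases "i \<noteq> j \<and> j \<noteq> k \<and> i \<noteq> k")
    case True
    then have "exp_perturb (\<lambda>p q. t i j k * triad_gen i j k p q) B
        = alpha_transform (exp (t i j k)) i j k B"
      by (simp add: alpha_transform_eq_exp_perturb)
    then show ?thesis
      using inv \<open>pcm B\<close> True unfolding triad_invariant_def by simp
  next
    case False
    then show ?thesis by (simp add: triad_gen_degenerate)
  qed
  then show ?case using insert.IH by (simp add: step B_def)
qed

lemma Collect_eq_conj: "{x. a = x \<and> P} = (if P then {a} else {})"
  by auto

lemma sum_sum_mult_triad_gen:
  fixes c :: "'n::finite \<Rightarrow> 'n \<Rightarrow> real"
  assumes rows: "\<And>i. (\<Sum>j\<in>UNIV. c i j) = 0" and cols: "\<And>j. (\<Sum>i\<in>UNIV. c i j) = 0"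
  shows "(\<Sum>i\<in>UNIV. \<Sum>j\<in>UNIV. c i j * triad_gen r i j p q) = c p q - c q p"
proof -
  have "(\<Sum>i\<in>UNIV. \<Sum>j\<in>UNIV. c i j * of_bool (p = r \<and> q = i)) = 0"
    "(\<Sum>i\<in>UNIV. \<Sum>j\<in>UNIV. c i j * of_bool (p = i \<and> q = j)) = c p q"
    "(\<Sum>i\<in>UNIV. \<Sum>j\<in>UNIV. c i j * of_bool (p = j \<and> q = r)) = 0"
    "(\<Sum>i\<in>UNIV. \<Sum>j\<in>UNIV. c i j * of_bool (p = j \<and> q = i)) = c q p"
    "(\<Sum>i\<in>UNIV. \<Sum>j\<in>UNIV. c i j * of_bool (p = r \<and> q = j)) = 0"
    "(\<Sum>i\<in>UNIV. \<Sum>j\<in>UNIV. c i j * of_bool (p = i \<and> q = r)) = 0"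
    by (auto simp: of_bool_def if_distrib sum.If_cases Int_def Collect_eq_conj rows cols
        simp del: sum_mult_of_bool_eq cong: conj_cong)
  then show ?thesis
    unfolding triad_gen_def by (simp only: distrib_left right_diff_distrib sum.distrib sum_subtractf)
qed

text \<open>For any fixed first vertex the combination already yields \<open>M\<close>; averaging over it
  avoids choosing one.\<close>

lemma sum_triad_gen_eq_skew:
  fixes M :: "'n::finite \<Rightarrow> 'n \<Rightarrow> real"
  assumes skew: "\<And>p q. M q p = - M p q" and rows: "\<And>p. (\<Sum>q\<in>UNIV. M p q) = 0"
  shows "(\<Sum>(i, j, k)\<in>UNIV. M j k / (2 * CARD('n)) * triad_gen i j k p q) = M p q"
proof -
  have cols: "(\<Sum>p\<in>UNIV. M p q) = 0" for q
  proof -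
    have "(\<Sum>p\<in>UNIV. M p q) = - (\<Sum>p\<in>UNIV. M q p)"
      by (simp add: skew[of q] sum_negf)
    then show ?thesis by (simp add: rows)
  qed
  have fixed_first: "(\<Sum>j\<in>UNIV. \<Sum>k\<in>UNIV. M j k / 2 * triad_gen i j k p q) = M p q" for i
  proof -
    have "(\<Sum>j\<in>UNIV. \<Sum>k\<in>UNIV. M j k / 2 * triad_gen i j k p q) = M p q / 2 - M q p / 2"
      by (rule sum_sum_mult_triad_gen) (simp_all add: sum_divide_distrib[symmetric] rows cols)
    then show ?thesis by (simp add: skew[of p q])
  qed
  have "(\<Sum>(i, j, k)\<in>UNIV. M j k / (2 * CARD('n)) * triad_gen i j k p q)
      = (\<Sum>i\<in>UNIV. \<Sum>j\<in>UNIV. \<Sum>k\<in>UNIV. M j k / 2 * triad_gen i j k p q) / CARD('n)"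
    unfolding UNIV_Times_UNIV[symmetric] sum.cartesian_product[symmetric]
    by (simp add: sum_divide_distrib)
  also have "\<dots> = (\<Sum>i\<in>(UNIV :: 'n set). M p q) / CARD('n)"
    by (simp only: fixed_first)
  also have "\<dots> = M p q"
    by simp
  finally show ?thesis .
qed

lemma triad_invariant_exp_perturb_skew:
  fixes M :: "'n::finite \<Rightarrow> 'n \<Rightarrow> real"
  assumes "triad_invariant f" "pcm A"
    and "\<And>p q. M q p = - M p q" "\<And>p. (\<Sum>q\<in>UNIV. M p q) = 0"
  shows "f (exp_perturb M A) = f A"
proof -
  have "f (exp_perturb (\<lambda>p q. \<Sum>(i, j, k)\<in>UNIV. M j k / (2 * CARD('n)) * triad_gen i j k p q) A)
      = f A"
    by (rule triad_invariant_exp_perturb_sum[OF assms(1) finite assms(2)])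
  moreover have "(\<lambda>p q. \<Sum>(i, j, k)\<in>UNIV. M j k / (2 * CARD('n)) * triad_gen i j k p q) = M"
    by (intro ext sum_triad_gen_eq_skew assms(3,4))
  ultimately show ?thesis by simp
qed

definition log_row_mean :: "real^'n^'n \<Rightarrow> 'n \<Rightarrow> real" where
  "log_row_mean A i = (\<Sum>j\<in>UNIV. ln (A$i$j)) / CARD('n)"

lemma llsm_eq_exp_log_row_mean:
  fixes A :: "real^'n^'n"
  assumes "\<And>i j. A$i$j > 0"
  shows "llsm A = (\<chi> i. exp (log_row_mean A i) / (\<Sum>k\<in>UNIV. exp (log_row_mean A k)))"
proof -
  have "(\<Prod>j\<in>UNIV. A$i$j powr (1 / CARD('n))) = exp (log_row_mean A i)" for i
  proof -
    have "A$i$j \<noteq> 0" for j using assms[of i j] by simp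
    then show ?thesis by (simp add: powr_def log_row_mean_def exp_sum[symmetric] sum_divide_distrib)
  qed
  then show ?thesis unfolding llsm_def by simp
qed

lemma log_row_mean_exp_perturb:
  fixes A :: "real^'n^'n"
  assumes "\<And>i j. A$i$j > 0"
  shows "log_row_mean (exp_perturb E A) i = log_row_mean A i + (\<Sum>q\<in>UNIV. E i q) / CARD('n)"
proof -
  have "A$i$j \<noteq> 0" for j using assms[of i j] by simp
  then show ?thesis by (simp add: log_row_mean_def ln_mult sum.distrib add_divide_distrib)
qed

lemma llsm_exp_perturb:
  fixes A :: "real^'n^'n"
  assumes "\<And>i j. A$i$j > 0" and "\<And>p. (\<Sum>q\<in>UNIV. E p q) = 0"
  shows "llsm (exp_perturb E A) = llsm A"
  using assms by (simp add: llsm_eq_exp_log_row_mean log_row_mean_exp_perturb)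

lemma sum_log_row_mean:
  fixes A :: "real^'n^'n"
  assumes "pcm A"
  shows "(\<Sum>i\<in>UNIV. log_row_mean A i) = 0"
proof -
  have "(\<Sum>i\<in>UNIV. \<Sum>j\<in>UNIV. ln (A$i$j)) = (\<Sum>j\<in>UNIV. \<Sum>i\<in>UNIV. ln (A$i$j))"
    by (rule sum.swap)
  also have "\<dots> = (\<Sum>j\<in>UNIV. \<Sum>i\<in>UNIV. - ln (A$j$i))"
    by (intro sum.cong refl) (rule pcm_ln_swap[OF assms])
  also have "\<dots> = - (\<Sum>j\<in>UNIV. \<Sum>i\<in>UNIV. ln (A$j$i))"
    by (simp add: sum_negf)
  finally show ?thesis
    unfolding log_row_mean_def by (simp add: sum_divide_distrib[symmetric])
qed

lemma sum_exp_log_row_mean_pos: "(\<Sum>k\<in>UNIV. exp (log_row_mean A k)) > 0"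
  by (simp add: sum_pos)

lemma weighting_method_llsm: "weighting_method llsm"
  unfolding weighting_method_def weight_vector_def
proof (intro allI impI conjI)
  fix A :: "real^'n^'n"
  assume "pcm A"
  then have llsm_nth: "llsm A $ i = exp (log_row_mean A i) / (\<Sum>k\<in>UNIV. exp (log_row_mean A k))" for i
    by (simp add: llsm_eq_exp_log_row_mean pcm_pos)
  show "llsm A $ i > 0" for i
    unfolding llsm_nth using sum_exp_log_row_mean_pos[of A] by simp
  show "(\<Sum>i\<in>UNIV. llsm A $ i) = 1"
    unfolding llsm_nth sum_divide_distrib[symmetric] using sum_exp_log_row_mean_pos[of A] by simp
qed

lemma correct_method_llsm: "correct_method llsm"
  unfolding correct_method_def
proof (intro allI impI)
  fix A :: "real^'n^'n" and i j
  assume A: "pcm A \<and> consistent_pcm A"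
  have row: "ln (A$i$q) = ln (A$i$j) + ln (A$j$q)" for q
  proof -
    have "A$i$q = A$i$j * A$j$q" using A unfolding consistent_pcm_def by blast
    then show ?thesis using A pcm_pos[of A i j] pcm_pos[of A j q] by (simp add: ln_mult)
  qed
  have "(\<Sum>q\<in>UNIV. ln (A$i$q)) = (\<Sum>q\<in>UNIV. ln (A$i$j) + ln (A$j$q))"
    by (intro sum.cong refl) (rule row)
  then have "log_row_mean A i = ln (A$i$j) + log_row_mean A j"
    unfolding log_row_mean_def by (simp add: sum.distrib field_simps)
  then have "exp (log_row_mean A i) / exp (log_row_mean A j) = A$i$j"
    using A pcm_pos[of A i j] by (simp add: exp_add)
  then show "llsm A $ i / llsm A $ j = A$i$j"
    using A sum_exp_log_row_mean_pos[of A] by (simp add: llsm_eq_exp_log_row_mean pcm_pos)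
qed

lemma triad_invariant_llsm: "triad_invariant llsm"
  unfolding triad_invariant_def
  by (auto simp: alpha_transform_eq_exp_perturb llsm_exp_perturb pcm_pos
      sum_distrib_left[symmetric] sum_triad_gen_row)

lemma weight_vector_eq_if_ratios_eq:
  assumes u: "weight_vector u" and v: "weight_vector v" and ratios: "\<And>i j. u$i / u$j = v$i / v$j"
  shows "u = v"
proof -
  have "u$j = v$j" for j
  proof -
    have uj: "u$j > 0" and vj: "v$j > 0" using u v unfolding weight_vector_def by blast+
    have "u$i = v$i * (u$j / v$j)" for i
      using ratios[of i j] uj vj by (simp add: field_simps)
    then have "(\<Sum>i\<in>UNIV. u$i) = (\<Sum>i\<in>UNIV. v$i * (u$j / v$j))"
      by (intro sum.cong refl)
    then have "(\<Sum>i\<in>UNIV. u$i) = (\<Sum>i\<in>UNIV. v$i) * (u$j / v$j)"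
      by (simp only: sum_distrib_right)
    then show ?thesis using u v vj unfolding weight_vector_def by simp
  qed
  then show ?thesis by (simp add: vec_eq_iff)
qed

lemma correct_methods_agree_on_consistent:
  assumes "weighting_method f" "weighting_method g" "correct_method f" "correct_method g"
    and "pcm A" "consistent_pcm A"
  shows "f A = g A"
  using assms unfolding weighting_method_def correct_method_def
  by (intro weight_vector_eq_if_ratios_eq) auto

lemma pcm_exp_diff: "pcm (\<chi> p q. exp (\<rho> p - \<rho> q))"
  unfolding pcm_def by (simp add: exp_diff)

lemma consistent_pcm_exp_diff: "consistent_pcm (\<chi> p q. exp (\<rho> p - \<rho> q))"
  unfolding consistent_pcm_def by (simp add: exp_add[symmetric])

lemma exp_perturb_log_residual:
  assumes "pcm A"
  shows "exp_perturb (\<lambda>p q. \<rho> p - \<rho> q - ln (A$p$q)) A = (\<chi> p q. exp (\<rho> p - \<rho> q))"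
proof -
  have "A$p$q \<noteq> 0" for p q using pcm_pos[OF assms, of p q] by simp
  then show ?thesis using pcm_pos[OF assms] by (simp add: vec_eq_iff exp_diff)
qed

lemma sum_log_residual_row:
  assumes "pcm A"
  shows "(\<Sum>q\<in>UNIV. log_row_mean A p - log_row_mean A q - ln (A$p$q)) = 0"
  using sum_log_row_mean[OF assms] by (simp add: sum_subtractf log_row_mean_def)

lemma eq_llsm_if_correct_triad_invariant:
  fixes A :: "real^'n^'n"
  assumes "weighting_method f" "correct_method f" "triad_invariant f" and A: "pcm A"
  shows "f A = llsm A"
proof -
  define M where "M p q = log_row_mean A p - log_row_mean A q - ln (A$p$q)" for p q
  have skew: "M q p = - M p q" for p q
    unfolding M_def using pcm_ln_swap[OF A, of q p] by simp
  have rows: "(\<Sum>q\<in>UNIV. M p q) = 0" for p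
    unfolding M_def by (rule sum_log_residual_row[OF A])
  have perturbed: "exp_perturb M A = (\<chi> p q. exp (log_row_mean A p - log_row_mean A q))"
    unfolding M_def by (rule exp_perturb_log_residual[OF A])
  have "f A = f (exp_perturb M A)"
    using triad_invariant_exp_perturb_skew[OF assms(3) A skew rows] by simp
  also have "\<dots> = llsm (exp_perturb M A)"
    unfolding perturbed using assms(1,2)
    by (intro correct_methods_agree_on_consistent weighting_method_llsm correct_method_llsm
        pcm_exp_diff consistent_pcm_exp_diff)
  also have "\<dots> = llsm A"
    using rows pcm_pos[OF A] by (intro llsm_exp_perturb)
  finally show ?thesis .
qed

lemma correct_method_cong:
  assumes "\<And>A. pcm A \<Longrightarrow> f A = g A"
  shows "correct_method f \<longleftrightarrow> correct_method g"
  unfolding correct_method_def using assms by (metis (no_types))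

lemma triad_invariant_cong:
  assumes "\<And>A. pcm A \<Longrightarrow> f A = g A"
  shows "triad_invariant f \<longleftrightarrow> triad_invariant g"
  unfolding triad_invariant_def using assms pcm_alpha_transform by (metis (no_types))

theorem theorem4p1:
  fixes f :: "real^'n^'n \<Rightarrow> real^'n"
  assumes "weighting_method f"
  shows "(correct_method f \<and> triad_invariant f) \<longleftrightarrow> (\<forall>A. pcm A \<longrightarrow> f A = llsm A)"
proof
  assume "correct_method f \<and> triad_invariant f"
  then show "\<forall>A. pcm A \<longrightarrow> f A = llsm A"
    using eq_llsm_if_correct_triad_invariant[OF assms] by blast
next
  assume "\<forall>A. pcm A \<longrightarrow> f A = llsm A"
  then have agree: "\<And>A. pcm A \<Longrightarrow> f A = llsm A" by blast
  have "correct_method f \<longleftrightarrow> correct_method (llsm :: real^'n^'n \<Rightarrow> real^'n)"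
    by (rule correct_method_cong) (rule agree)
  moreover have "triad_invariant f \<longleftrightarrow> triad_invariant (llsm :: real^'n^'n \<Rightarrow> real^'n)"
    by (rule triad_invariant_cong) (rule agree)
  ultimately show "correct_method f \<and> triad_invariant f"
    using correct_method_llsm triad_invariant_llsm by blast
qed

end
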